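(* Let $k\geq 2$ be an integer and let $G=(V,E)$ be a graph on $n$ vertices. Let $\sim$ be a symmetric binary relation on $E$ such that for every $uv\in E$ and every $w\in V$, $w$ has at most $s$ neighbours $z\in V$ with $uv\sim wz$. Then the number of homomorphic $2k$-cycles $(x_1,\dots,x_{2k})$ in $G$ such that $x_ix_{i+1}\sim x_jx_{j+1}$ for some $i\neq j$ (indices modulo $2k$) is at most $$32k^{3/2}s^{1/2}\Delta(G)^{1/2}n^{\frac{1}{2k}}\hom(C_{2k},G)^{1-\frac{1}{2k}}.$$
   Context: A homomorphic $2k$-cycle in $G$ is a tuple $(x_1,\dots,x_{2k})\in V^{2k}$ (not necessarily distinct) with $x_ix_{i+1}\in E$ for all $1\leq i\leq 2k$, where $x_{2k+1}:=x_1$. $\hom(H,G)$ denotes the number of graph homomorphisms from $H$ to $G$ (maps $V(H)\to V(G)$ sending edges to edges); thus $\hom(C_{2k},G)$ is the number of homomorphic $2k$-cycles. $\Delta(G)$ is the maximum degree. *)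

theory Defs
  imports Complex_Main
begin

definition simple_graph :: "'a set \<Rightarrow> 'a set set \<Rightarrow> bool" where
  "simple_graph V E \<longleftrightarrow> finite V \<and> (\<forall>e\<in>E. \<exists>u v. e = {u, v} \<and> u \<noteq> v \<and> u \<in> V \<and> v \<in> V)"

definition degree :: "'a set \<Rightarrow> 'a set set \<Rightarrow> 'a \<Rightarrow> nat" where
  "degree V E u = card {v \<in> V. {u, v} \<in> E}"

definition max_degree :: "'a set \<Rightarrow> 'a set set \<Rightarrow> nat" where
  "max_degree V E = Max (insert 0 (degree V E ` V))"

definition hom_cycles :: "'a set \<Rightarrow> 'a set set \<Rightarrow> nat \<Rightarrow> 'a list set" where
  "hom_cycles V E m = {xs. length xs = m \<and> set xs \<subseteq> V \<and>
      (\<forall>i<m. {xs ! i, xs ! ((i + 1) mod m)} \<in> E)}"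

definition hom_cycle_count :: "'a set \<Rightarrow> 'a set set \<Rightarrow> nat \<Rightarrow> nat" where
  "hom_cycle_count V E m = card (hom_cycles V E m)"

end

theory Submission
  imports Defs "HOL-Analysis.Convex"
begin

text \<open>
  Write \<open>W\<^sub>L(a, b)\<close> for the number of walks of length \<open>L\<close> from \<open>a\<close> to \<open>b\<close> and
  \<open>T\<^sub>j = \<Sum>\<^sub>a\<^sub>,\<^sub>b W\<^sub>j(a, b)\<^sup>2\<close>, so that \<open>T\<^sub>0 = n\<close> and \<open>T\<^sub>k = hom(C\<^sub>2\<^sub>k, G)\<close>.
  Rotating a cycle with two related edges so that one of them becomes the closing edge
  \<open>x\<^sub>2\<^sub>kx\<^sub>1\<close> and the other one of the first \<open>k\<close> edges costs a factor \<open>2k\<close>.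
  Such an anchored cycle is a walk \<open>x\<^sub>1 \<dots> x\<^sub>k\<^sub>+\<^sub>1\<close>, a neighbour \<open>x\<^sub>2\<^sub>k\<close> of \<open>x\<^sub>1\<close>
  related to one of its \<open>k\<close> edges (at most \<open>ks\<close> choices) and a walk of length \<open>k - 1\<close>
  from \<open>x\<^sub>k\<^sub>+\<^sub>1\<close> to \<open>x\<^sub>2\<^sub>k\<close>. Two applications of Cauchy--Schwarz bound their number by
  \<open>\<surd>(ks) \<surd>T\<^sub>k \<surd>(\<Delta> T\<^sub>k\<^sub>-\<^sub>1)\<close>, and Cauchy--Schwarz once more shows that \<open>T\<^sub>j\<close> is log-convex,
  whence \<open>T\<^sub>k\<^sub>-\<^sub>1\<^sup>k \<le> n T\<^sub>k\<^sup>k\<^sup>-\<^sup>1\<close>.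
\<close>

lemma inj_rotate: "inj (rotate n)"
  unfolding rotate_def by (rule inj_fn[OF inj_rotate1])

lemma sum_mult_le_sqrt_sum_squares:
  fixes a b :: "'i \<Rightarrow> real"
  shows "(\<Sum>i\<in>I. a i * b i) \<le> sqrt (\<Sum>i\<in>I. (a i)\<^sup>2) * sqrt (\<Sum>i\<in>I. (b i)\<^sup>2)"
  using real_le_rsqrt[OF Cauchy_Schwarz_ineq_sum[of a b I]] by (simp add: real_sqrt_mult)

lemma sum_le_sqrt_card_sum_squares:
  fixes f :: "'i \<Rightarrow> real"
  shows "(\<Sum>i\<in>I. f i) \<le> sqrt (card I) * sqrt (\<Sum>i\<in>I. (f i)\<^sup>2)"
  using sum_mult_le_sqrt_sum_squares[of "\<lambda>_. 1" f I] by simp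

lemma log_convex_pow_le:
  fixes t :: "nat \<Rightarrow> nat"
  assumes "\<And>j. t (Suc j) ^ 2 \<le> t j * t (Suc (Suc j))"
  shows "t j ^ Suc j \<le> t 0 * t (Suc j) ^ j"
proof (induction j)
  case 0 then show ?case by simp
next
  case (Suc j)
  show ?case
  proof (cases "t (Suc j) = 0")
    case False
    have "t (Suc j) ^ Suc (Suc j) * t (Suc j) ^ j = (t (Suc j) ^ 2) ^ Suc j"
      by (simp flip: power_add power_mult add: mult_2)
    also have "\<dots> \<le> (t j * t (Suc (Suc j))) ^ Suc j"
      by (rule power_mono[OF assms]) simp
    also have "\<dots> = t j ^ Suc j * t (Suc (Suc j)) ^ Suc j"
      by (simp add: power_mult_distrib)
    also have "\<dots> \<le> (t 0 * t (Suc (Suc j)) ^ Suc j) * t (Suc j) ^ j"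
      using mult_right_mono[OF Suc.IH, of "t (Suc (Suc j)) ^ Suc j"] by (simp add: mult_ac)
    finally show ?thesis using False by simp
  qed simp
qed

lemma sqrt_mult_le_powr_of_pow_le:
  fixes n T U :: real
  assumes "k \<ge> 1" "0 \<le> n" "0 \<le> T" "0 \<le> U" and "U ^ k \<le> n * T ^ (k - 1)"
  shows "sqrt T * sqrt U \<le> n powr (1 / (2 * real k)) * T powr (1 - 1 / (2 * real k))"
proof (cases "T = 0")
  case False
  then have T: "T > 0" using assms by simp
  have k: "real k > 0" using assms by simp
  have "U = (U ^ k) powr (1 / k)"
    using assms k by (simp add: powr_powr flip: powr_realpow')
  also have "\<dots> \<le> (n * T ^ (k - 1)) powr (1 / k)"
    using assms by (intro powr_mono2) auto
  also have "\<dots> = n powr (1 / k) * T powr ((real k - 1) / k)"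
    using assms T by (simp add: powr_mult powr_powr of_nat_diff flip: powr_realpow)
  finally have U: "U \<le> n powr (1 / k) * T powr ((real k - 1) / k)" .
  have "sqrt T * sqrt U = (T * U) powr (1 / 2)"
    using assms by (simp add: powr_half_sqrt real_sqrt_mult)
  also have "\<dots> \<le> (T * (n powr (1 / k) * T powr ((real k - 1) / k))) powr (1 / 2)"
    using U T assms by (intro powr_mono2 mult_left_mono) auto
  also have "T * (n powr (1 / k) * T powr ((real k - 1) / k)) = n powr (1 / k) * T powr (1 + (real k - 1) / k)"
    using T by (simp add: powr_add)
  also have "(n powr (1 / k) * T powr (1 + (real k - 1) / k)) powr (1 / 2)
      = n powr (1 / (2 * real k)) * T powr ((1 + (real k - 1) / k) / 2)"
    using assms by (simp add: powr_mult powr_powr mult.commute)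
  also have "(1 + (real k - 1) / k) / 2 = 1 - 1 / (2 * real k)"
    using k by (simp add: field_simps)
  finally show ?thesis .
qed simp

definition cycle_edge :: "nat \<Rightarrow> 'a list \<Rightarrow> nat \<Rightarrow> 'a set" where
  "cycle_edge m xs i = {xs ! i, xs ! ((i + 1) mod m)}"

lemma mem_hom_cycles_iff:
  "xs \<in> hom_cycles V E m \<longleftrightarrow> length xs = m \<and> set xs \<subseteq> V \<and> (\<forall>i<m. cycle_edge m xs i \<in> E)"
  by (simp add: hom_cycles_def cycle_edge_def)

lemma cycle_edge_rotate:
  assumes "length xs = m" "i < m"
  shows "cycle_edge m (rotate r xs) i = cycle_edge m xs ((r + i) mod m)"
proof -
  have "(r + (i + 1) mod m) mod m = ((r + i) mod m + 1) mod m"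
    by (simp add: mod_simps)
  then show ?thesis
    using assms by (simp add: cycle_edge_def nth_rotate)
qed

lemma rotate_mem_hom_cycles:
  assumes "xs \<in> hom_cycles V E m"
  shows "rotate r xs \<in> hom_cycles V E m"
  using assms by (auto simp: mem_hom_cycles_iff cycle_edge_rotate)

lemma finite_hom_cycles: "finite V \<Longrightarrow> finite (hom_cycles V E m)"
  by (rule finite_subset[OF _ finite_lists_length_eq[of V m]]) (auto simp: hom_cycles_def)

lemma exists_anchoring_rotation:
  fixes i j k :: nat
  assumes "i < 2 * k" "j < 2 * k" "i \<noteq> j"
  shows "\<exists>r<2 * k. \<exists>t<k. ((r + (2 * k - 1)) mod (2 * k), (r + t) mod (2 * k)) \<in> {(i, j), (j, i)}"
proof -
  have *: "\<exists>r<2 * k. \<exists>t<k. ((r + (2 * k - 1)) mod (2 * k), (r + t) mod (2 * k)) \<in> {(i, j), (j, i)}"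
    if "i < j" "j < 2 * k" for i j :: nat
  proof (cases "j - i - 1 < k")
    case True
    have "(i + 1 + (2 * k - 1)) mod (2 * k) = i" "(i + 1 + (j - i - 1)) mod (2 * k) = j"
      using that by simp_all
    then show ?thesis
      using that True by (intro exI[of _ "i + 1"] conjI exI[of _ "j - i - 1"]) auto
  next
    case False
    \<comment> \<open>the gaps \<open>j - i - 1\<close> and \<open>i + 2k - j - 1\<close> add up to \<open>2k - 2\<close>\<close>
    have "((j + 1) mod (2 * k) + (2 * k - 1)) mod (2 * k) = (j + 2 * k) mod (2 * k)"
      unfolding mod_add_left_eq using that by (simp add: algebra_simps)
    moreover have "((j + 1) mod (2 * k) + (i + 2 * k - j - 1)) mod (2 * k) = (i + 2 * k) mod (2 * k)"
      unfolding mod_add_left_eq using that by (simp add: algebra_simps)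
    ultimately show ?thesis
      using that False by (intro exI[of _ "(j + 1) mod (2 * k)"] conjI exI[of _ "i + 2 * k - j - 1"]) auto
  qed
  show ?thesis
    using assms *[of i j] *[of j i] by (cases "i < j") auto
qed

lemma card_le_mult_card_rotations:
  assumes "finite C" "\<And>xs r. xs \<in> C \<Longrightarrow> rotate r xs \<in> C" "A \<subseteq> C"
    and "\<And>xs. xs \<in> A \<Longrightarrow> \<exists>r<m. Q (rotate r xs)"
  shows "card A \<le> m * card {ys \<in> C. Q ys}"
proof -
  have "A \<subseteq> (\<Union>r<m. {xs \<in> C. Q (rotate r xs)})"
    using assms(3,4) by blast
  then have "card A \<le> card (\<Union>r<m. {xs \<in> C. Q (rotate r xs)})"
    using assms(1) by (intro card_mono) auto
  also have "\<dots> \<le> (\<Sum>r<m. card {xs \<in> C. Q (rotate r xs)})"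
    by (rule card_UN_le) simp
  also have "\<dots> \<le> (\<Sum>r<m. card {ys \<in> C. Q ys})"
  proof (intro sum_mono card_inj_on_le)
    fix r
    show "inj_on (rotate r) {xs \<in> C. Q (rotate r xs)}"
      using inj_rotate by (rule inj_on_subset) simp
  qed (use assms in auto)
  finally show ?thesis by simp
qed

locale fin_simple_graph =
  fixes V :: "'a set" and E :: "'a set set"
  assumes simple_graph: "simple_graph V E"
begin

lemma finite_V: "finite V"
  using simple_graph by (simp add: simple_graph_def)

lemma edge_vertices: "{a, b} \<in> E \<Longrightarrow> a \<in> V \<and> b \<in> V"
  using simple_graph unfolding simple_graph_def by (metis doubleton_eq_iff)

definition walk :: "'a list \<Rightarrow> bool" where
  "walk xs \<longleftrightarrow> set xs \<subseteq> V \<and> successively (\<lambda>a b. {a, b} \<in> E) xs"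

definition walks :: "nat \<Rightarrow> 'a list set" where
  "walks L = {xs. length xs = Suc L \<and> walk xs}"

definition walks_between :: "nat \<Rightarrow> 'a \<Rightarrow> 'a \<Rightarrow> 'a list set" where
  "walks_between L a b = {xs \<in> walks L. hd xs = a \<and> last xs = b}"

definition walk_count :: "nat \<Rightarrow> 'a \<Rightarrow> 'a \<Rightarrow> nat" where
  "walk_count L a b = card (walks_between L a b)"

lemma walk_append_iff:
  "walk (xs @ ys) \<longleftrightarrow> walk xs \<and> walk ys \<and> (xs = [] \<or> ys = [] \<or> {last xs, hd ys} \<in> E)"
  by (auto simp: walk_def successively_append_iff)

lemma walk_Nil [simp]: "walk []"
  by (simp add: walk_def)

lemma walk_Cons: "walk (x # ys) \<longleftrightarrow> x \<in> V \<and> walk ys \<and> (ys = [] \<or> {x, hd ys} \<in> E)"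
  using walk_append_iff[of "[x]" ys] by (simp add: walk_def)

lemma walk_take: "walk xs \<Longrightarrow> walk (take n xs)"
  and walk_drop: "walk xs \<Longrightarrow> walk (drop n xs)"
  using walk_append_iff[of "take n xs" "drop n xs"] by simp_all

lemma walk_rev: "walk (rev xs) \<longleftrightarrow> walk xs"
  by (simp add: walk_def insert_commute)

lemma finite_walks: "finite (walks L)"
  by (rule finite_subset[OF _ finite_lists_length_eq[OF finite_V, of "Suc L"]])
    (auto simp: walks_def walk_def)

lemma hd_last_mem_walks: "xs \<in> walks L \<Longrightarrow> hd xs \<in> V \<and> last xs \<in> V"
  by (cases xs) (auto simp: walks_def walk_def)

lemma finite_walks_between: "finite (walks_between L a b)"
  using finite_walks by (simp add: walks_between_def)

lemma walks_between_0: "walks_between 0 a b = (if a = b \<and> a \<in> V then {[a]} else {})"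
  by (auto simp: walks_between_def walks_def walk_def length_Suc_conv)

lemma walk_count_0: "walk_count 0 a b = (if a = b \<and> a \<in> V then 1 else 0)"
  by (auto simp: walk_count_def walks_between_0)

lemma walk_count_sym: "walk_count L a b = walk_count L b a"
proof -
  have "rev ` walks_between L a b = walks_between L b a"
    by (force simp: walks_between_def walks_def walk_rev hd_rev last_rev intro: rev_image_eqI[of "rev _"])
  then show ?thesis
    by (metis card_image inj_on_def rev_rev_ident walk_count_def)
qed

lemma walks_between_append_tl:
  assumes "xs \<in> walks_between i a c" "ys \<in> walks_between j c b"
  shows "xs @ tl ys \<in> walks_between (i + j) a b"
proof -
  obtain ys' where "ys = last xs # ys'"
    using assms by (cases ys) (auto simp: walks_between_def walks_def)
  then show ?thesis
    using assms by (auto simp: walks_between_def walks_def walk_append_iff walk_Cons hd_append)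
qed

lemma walks_between_take_drop:
  assumes "xs \<in> walks_between (i + j) a b"
  shows "take (Suc i) xs \<in> walks_between i a (xs ! i)" "drop i xs \<in> walks_between j (xs ! i) b"
proof -
  have len: "length xs = Suc (i + j)" and "walk xs" "hd xs = a" "last xs = b"
    using assms by (auto simp: walks_between_def walks_def)
  moreover have "last (take (Suc i) xs) = xs ! i"
    using len by (simp add: take_Suc_conv_app_nth)
  ultimately show "take (Suc i) xs \<in> walks_between i a (xs ! i)" "drop i xs \<in> walks_between j (xs ! i) b"
    by (auto simp: walks_between_def walks_def walk_take walk_drop hd_drop_conv_nth)
qed

lemma walk_count_add: "walk_count (i + j) a b = (\<Sum>c\<in>V. walk_count i a c * walk_count j c b)"
proof -
  define glue where "glue = (\<lambda>(xs, ys). xs @ tl ys :: 'a list)"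
  define pairs where "pairs = (\<Union>c\<in>V. walks_between i a c \<times> walks_between j c b)"
  have "bij_betw glue pairs (walks_between (i + j) a b)"
  proof (rule bij_betw_imageI)
    show "inj_on glue pairs"
    proof (rule inj_onI, clarify)
      fix xs ys xs' ys'
      assume "(xs, ys) \<in> pairs" "(xs', ys') \<in> pairs" "glue (xs, ys) = glue (xs', ys')"
      then show "xs = xs' \<and> ys = ys'"
        unfolding pairs_def glue_def walks_between_def walks_def
        by (cases ys; cases ys') auto
    qed
    show "glue ` pairs = walks_between (i + j) a b"
    proof (intro equalityI subsetI)
      fix xs assume "xs \<in> glue ` pairs"
      then show "xs \<in> walks_between (i + j) a b"
        by (auto simp: glue_def pairs_def walks_between_append_tl)
    next
      fix xs assume xs: "xs \<in> walks_between (i + j) a b"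
      then have "xs ! i \<in> V" "length xs = Suc (i + j)"
        by (auto simp: walks_between_def walks_def walk_def)
      moreover have "xs = glue (take (Suc i) xs, drop i xs)"
        using \<open>length xs = Suc (i + j)\<close> by (simp add: glue_def tl_drop flip: drop_Suc)
      ultimately show "xs \<in> glue ` pairs"
        using walks_between_take_drop[OF xs] unfolding pairs_def by blast
    qed
  qed
  then have "walk_count (i + j) a b = card pairs"
    by (simp add: walk_count_def bij_betw_same_card)
  also have "\<dots> = (\<Sum>c\<in>V. card (walks_between i a c \<times> walks_between j c b))"
    unfolding pairs_def
    by (rule card_UN_disjoint) (auto simp: finite_V finite_walks_between, auto simp: walks_between_def)
  finally show ?thesis
    by (simp add: walk_count_def card_cartesian_product)
qed

lemma sum_walk_count_diag_add:
  "(\<Sum>a\<in>V. walk_count (i + j) a a) = (\<Sum>a\<in>V. \<Sum>b\<in>V. walk_count i a b * walk_count j a b)"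
  by (simp add: walk_count_add walk_count_sym[of j])

lemma mem_hom_cycles_iff_walk:
  assumes "length xs = m" "m \<ge> 1"
  shows "xs \<in> hom_cycles V E m \<longleftrightarrow> walk (xs @ [hd xs])"
proof -
  have "xs \<noteq> []"
    using assms by auto
  then have ends: "hd xs = xs ! 0" "last xs = xs ! (m - 1)"
    using assms by (simp_all add: hd_conv_nth last_conv_nth)
  have edge: "cycle_edge m xs i = (if Suc i < m then {xs ! i, xs ! Suc i} else {last xs, hd xs})"
    if "i < m" for i
  proof (cases "Suc i < m")
    case False
    then have "i = m - 1" "i + 1 = m"
      using that by auto
    then show ?thesis
      using False by (simp add: cycle_edge_def ends)
  qed (simp add: cycle_edge_def)
  have "(\<forall>i<m. cycle_edge m xs i \<in> E) \<longleftrightarrow>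
      (\<forall>i. Suc i < m \<longrightarrow> {xs ! i, xs ! Suc i} \<in> E) \<and> {last xs, hd xs} \<in> E"
  proof safe
    assume "\<forall>i<m. cycle_edge m xs i \<in> E"
    then have "cycle_edge m xs (m - 1) \<in> E"
      using assms by simp
    then show "{last xs, hd xs} \<in> E"
      using edge[of "m - 1"] assms by simp
  qed (use edge assms in \<open>auto split: if_splits\<close>)
  moreover have "walk (xs @ [hd xs]) \<longleftrightarrow> walk xs \<and> {last xs, hd xs} \<in> E"
    using \<open>xs \<noteq> []\<close> by (auto simp: walk_append_iff walk_Cons walk_def[of xs])
  moreover have "walk xs \<longleftrightarrow> set xs \<subseteq> V \<and> (\<forall>i. Suc i < m \<longrightarrow> {xs ! i, xs ! Suc i} \<in> E)"
    using assms by (simp add: walk_def successively_conv_nth)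
  ultimately show ?thesis
    using assms by (auto simp: mem_hom_cycles_iff)
qed

lemma card_hom_cycles:
  assumes "m \<ge> 1"
  shows "card (hom_cycles V E m) = (\<Sum>a\<in>V. walk_count m a a)"
proof -
  have "bij_betw (\<lambda>xs. xs @ [hd xs]) (hom_cycles V E m) (\<Union>a\<in>V. walks_between m a a)"
  proof (rule bij_betw_imageI)
    show "inj_on (\<lambda>xs. xs @ [hd xs]) (hom_cycles V E m)"
      by (auto simp: inj_on_def)
    show "(\<lambda>xs. xs @ [hd xs]) ` hom_cycles V E m = (\<Union>a\<in>V. walks_between m a a)"
    proof (intro equalityI subsetI)
      fix ys assume "ys \<in> (\<lambda>xs. xs @ [hd xs]) ` hom_cycles V E m"
      then obtain xs where xs: "xs \<in> hom_cycles V E m" and ys: "ys = xs @ [hd xs]"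
        by blast
      then have len: "length xs = m" and "set xs \<subseteq> V"
        by (auto simp: hom_cycles_def)
      then have "xs \<noteq> []" "hd xs \<in> V"
        using assms by (cases xs; auto)+
      moreover have "walk ys"
        using mem_hom_cycles_iff_walk[OF len assms] xs ys by simp
      ultimately show "ys \<in> (\<Union>a\<in>V. walks_between m a a)"
        using len ys by (auto simp: walks_between_def walks_def)
    next
      fix ys assume "ys \<in> (\<Union>a\<in>V. walks_between m a a)"
      then have len: "length ys = Suc m" and "walk ys" and ends: "hd ys = last ys"
        by (auto simp: walks_between_def walks_def)
      define xs where "xs = butlast ys"
      have len_xs: "length xs = m"
        using len by (simp add: xs_def)
      then have "xs \<noteq> []"
        using assms by auto
      moreover have "ys = xs @ [last ys]"
        using len by (simp add: xs_def flip: length_greater_0_conv)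
      ultimately have ys: "ys = xs @ [hd xs]"
        using ends by (metis hd_append2)
      then have "xs \<in> hom_cycles V E m"
        using mem_hom_cycles_iff_walk[OF len_xs assms] \<open>walk ys\<close> by simp
      then show "ys \<in> (\<lambda>xs. xs @ [hd xs]) ` hom_cycles V E m"
        using ys by blast
    qed
  qed
  then have "card (hom_cycles V E m) = card (\<Union>a\<in>V. walks_between m a a)"
    by (rule bij_betw_same_card)
  also have "\<dots> = (\<Sum>a\<in>V. walk_count m a a)"
    unfolding walk_count_def
    by (rule card_UN_disjoint) (auto simp: finite_V finite_walks_between, auto simp: walks_between_def)
  finally show ?thesis .
qed

definition walk_square_sum :: "nat \<Rightarrow> nat" where
  "walk_square_sum j = (\<Sum>a\<in>V. \<Sum>b\<in>V. walk_count j a b ^ 2)"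

lemma hom_cycle_count_eq_walk_square_sum:
  assumes "k \<ge> 1"
  shows "hom_cycle_count V E (2 * k) = walk_square_sum k"
  using assms card_hom_cycles[of "k + k"] sum_walk_count_diag_add[of k k]
  by (simp add: hom_cycle_count_def walk_square_sum_def power2_eq_square mult_2)

lemma walk_square_sum_0: "walk_square_sum 0 = card V"
proof -
  have "walk_square_sum 0 = (\<Sum>a\<in>V. \<Sum>b\<in>V. if b = a then 1 else 0)"
    unfolding walk_square_sum_def by (intro sum.cong) (auto simp: walk_count_0)
  then show ?thesis
    by (simp add: finite_V)
qed

lemma walk_square_sum_Suc_square_le:
  "walk_square_sum (Suc j) ^ 2 \<le> walk_square_sum j * walk_square_sum (Suc (Suc j))"
proof -
  let ?w = "\<lambda>L p. real (walk_count L (fst p) (snd p))"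
  have square_sum: "real (walk_square_sum L) = (\<Sum>p\<in>V \<times> V. (?w L p)\<^sup>2)" for L
    by (simp add: walk_square_sum_def sum.cartesian_product case_prod_beta)
  \<comment> \<open>split the closed walks of length \<open>2j + 2\<close> as \<open>(j + 1) + (j + 1)\<close> and as \<open>j + (j + 2)\<close>\<close>
  have "walk_square_sum (Suc j) = (\<Sum>a\<in>V. walk_count (j + Suc (Suc j)) a a)"
    using sum_walk_count_diag_add[of "Suc j" "Suc j"]
    by (simp add: walk_square_sum_def power2_eq_square)
  then have "real (walk_square_sum (Suc j)) = (\<Sum>p\<in>V \<times> V. ?w j p * ?w (Suc (Suc j)) p)"
    by (simp only: sum_walk_count_diag_add) (simp add: sum.cartesian_product case_prod_beta)
  then have "real (walk_square_sum (Suc j)) ^ 2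
      \<le> real (walk_square_sum j) * real (walk_square_sum (Suc (Suc j)))"
    unfolding square_sum by (simp only: Cauchy_Schwarz_ineq_sum)
  then show ?thesis
    by (simp flip: of_nat_power of_nat_mult)
qed

lemma walk_square_sum_pow_le:
  "walk_square_sum j ^ Suc j \<le> card V * walk_square_sum (Suc j) ^ j"
  using log_convex_pow_le[of walk_square_sum, OF walk_square_sum_Suc_square_le]
  by (simp add: walk_square_sum_0)

definition neighbours :: "'a \<Rightarrow> 'a set" where
  "neighbours u = {v \<in> V. {u, v} \<in> E}"

lemma finite_neighbours: "finite (neighbours u)"
  using finite_V by (simp add: neighbours_def)

lemma card_neighbours_le_max_degree: "u \<in> V \<Longrightarrow> card (neighbours u) \<le> max_degree V E"
  unfolding max_degree_def neighbours_def degree_def[symmetric]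
  using finite_V by (intro Max_ge) auto

lemma sum_sum_neighbours_le:
  fixes F :: "'a \<Rightarrow> real"
  assumes "\<And>y. F y \<ge> 0"
  shows "(\<Sum>u\<in>V. \<Sum>y\<in>neighbours u. F y) \<le> max_degree V E * (\<Sum>y\<in>V. F y)"
proof -
  have "(\<Sum>u\<in>V. \<Sum>y\<in>neighbours u. F y) = (\<Sum>y\<in>V. \<Sum>u\<in>neighbours y. F y)"
    unfolding neighbours_def using sum.swap_restrict[OF finite_V finite_V, of "\<lambda>_ y. F y"]
    by (simp add: insert_commute)
  also have "\<dots> = (\<Sum>y\<in>V. card (neighbours y) * F y)"
    by simp
  also have "\<dots> \<le> (\<Sum>y\<in>V. max_degree V E * F y)"
    using assms card_neighbours_le_max_degree by (intro sum_mono mult_right_mono) auto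
  finally show ?thesis
    by (simp add: sum_distrib_left)
qed

lemma sum_walks_by_ends:
  fixes h :: "'a \<Rightarrow> 'a \<Rightarrow> real"
  shows "(\<Sum>xs\<in>walks L. h (hd xs) (last xs)) = (\<Sum>u\<in>V. \<Sum>v\<in>V. walk_count L u v * h u v)"
proof -
  have walks_eq: "walks L = (\<Union>p\<in>V \<times> V. walks_between L (fst p) (snd p))"
    by (auto simp: walks_between_def dest: hd_last_mem_walks)
  have "(\<Sum>xs\<in>walks L. h (hd xs) (last xs))
      = (\<Sum>p\<in>V \<times> V. \<Sum>xs\<in>walks_between L (fst p) (snd p). h (hd xs) (last xs))"
    unfolding walks_eq by (rule sum.UNION_disjoint,
        auto simp: finite_V finite_walks_between, auto simp: walks_between_def prod_eq_iff)
  also have "\<dots> = (\<Sum>p\<in>V \<times> V. walk_count L (fst p) (snd p) * h (fst p) (snd p))"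
    by (intro sum.cong refl) (simp add: walk_count_def walks_between_def)
  also have "\<dots> = (\<Sum>u\<in>V. \<Sum>v\<in>V. walk_count L u v * h u v)"
    by (rule sum.cartesian_product[symmetric, unfolded case_prod_beta])
  finally show ?thesis .
qed

definition anchored_cycles :: "('a set \<Rightarrow> 'a set \<Rightarrow> bool) \<Rightarrow> nat \<Rightarrow> 'a list set" where
  "anchored_cycles R k = {ys \<in> hom_cycles V E (2 * k).
     \<exists>t<k. R (cycle_edge (2 * k) ys (2 * k - 1)) (cycle_edge (2 * k) ys t)}"

definition related_neighbours :: "('a set \<Rightarrow> 'a set \<Rightarrow> bool) \<Rightarrow> nat \<Rightarrow> 'a list \<Rightarrow> 'a set" where
  "related_neighbours R k xs = {y \<in> neighbours (hd xs). \<exists>t<k. R {y, hd xs} {xs ! t, xs ! Suc t}}"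

lemma card_related_neighbours_le:
  assumes sym: "\<forall>e\<in>E. \<forall>f\<in>E. R e f \<longrightarrow> R f e"
    and bound: "\<forall>u v w. {u, v} \<in> E \<longrightarrow> w \<in> V \<longrightarrow> card {z \<in> V. {w, z} \<in> E \<and> R {u, v} {w, z}} \<le> s"
    and xs: "xs \<in> walks k"
  shows "card (related_neighbours R k xs) \<le> k * s"
proof -
  define B where "B t = {z \<in> V. {hd xs, z} \<in> E \<and> R {xs ! t, xs ! Suc t} {hd xs, z}}" for t
  have edge: "{xs ! t, xs ! Suc t} \<in> E" if "t < k" for t
    using xs that by (simp add: walks_def walk_def successively_conv_nth)
  have "related_neighbours R k xs \<subseteq> (\<Union>t<k. B t)"
    using sym edge by (fastforce simp: related_neighbours_def neighbours_def B_def insert_commute)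
  then have "card (related_neighbours R k xs) \<le> card (\<Union>t<k. B t)"
    using finite_V by (intro card_mono) (auto simp: B_def)
  also have "\<dots> \<le> (\<Sum>t<k. card (B t))"
    by (rule card_UN_le) simp
  also have "\<dots> \<le> (\<Sum>t<k. s)"
    using bound edge hd_last_mem_walks[OF xs] by (intro sum_mono) (simp add: B_def)
  finally show ?thesis
    by simp
qed

lemma anchored_cycle_split:
  assumes "k \<ge> 1" and ys: "ys \<in> anchored_cycles R k"
  shows "take (Suc k) ys \<in> walks k"
    and "last ys \<in> related_neighbours R k (take (Suc k) ys)"
    and "drop k ys \<in> walks_between (k - 1) (last (take (Suc k) ys)) (last ys)"
proof -
  obtain t where cyc: "ys \<in> hom_cycles V E (2 * k)" and "t < k"
    and R: "R (cycle_edge (2 * k) ys (2 * k - 1)) (cycle_edge (2 * k) ys t)"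
    using ys by (auto simp: anchored_cycles_def)
  then have len2: "length ys = 2 * k"
    by (simp add: hom_cycles_def)
  then have len: "length ys = Suc (k + (k - 1))"
    using assms by simp
  then have "walk (ys @ [hd ys])"
    using mem_hom_cycles_iff_walk[of ys "2 * k"] cyc assms len2 by simp
  then have "ys \<in> walks_between (k + (k - 1)) (hd ys) (last ys)"
    using len by (simp add: walks_between_def walks_def walk_append_iff)
  note split_walk = walks_between_take_drop[OF this]
  then show "take (Suc k) ys \<in> walks k"
    and "drop k ys \<in> walks_between (k - 1) (last (take (Suc k) ys)) (last ys)"
    by (auto simp: walks_between_def)
  have "ys \<noteq> []"
    using len by auto
  then have "cycle_edge (2 * k) ys (2 * k - 1) = {last ys, hd ys}"
    using assms len2 by (simp add: cycle_edge_def hd_conv_nth last_conv_nth)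
  moreover have "cycle_edge (2 * k) ys t = {take (Suc k) ys ! t, take (Suc k) ys ! Suc t}"
    using \<open>t < k\<close> by (simp add: cycle_edge_def)
  moreover have "cycle_edge (2 * k) ys (2 * k - 1) \<in> E"
    using cyc assms by (simp add: mem_hom_cycles_iff)
  ultimately show "last ys \<in> related_neighbours R k (take (Suc k) ys)"
    using R \<open>t < k\<close> edge_vertices split_walk
    by (auto simp: related_neighbours_def neighbours_def walks_between_def insert_commute)
qed

lemma card_anchored_cycles_le_sum:
  assumes "k \<ge> 1"
  shows "card (anchored_cycles R k)
    \<le> (\<Sum>xs\<in>walks k. \<Sum>y\<in>related_neighbours R k xs. walk_count (k - 1) (last xs) y)"
proof -
  define split where "split ys = (take (Suc k) ys, drop k ys)" for ys :: "'a list"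
  define T where "T = Sigma (walks k) (\<lambda>xs. \<Union>y\<in>related_neighbours R k xs. walks_between (k - 1) (last xs) y)"
  have "split ` anchored_cycles R k \<subseteq> T"
    using anchored_cycle_split[OF assms, of _ R] by (fastforce simp: split_def T_def)
  moreover have "inj_on split (anchored_cycles R k)"
    by (rule inj_onI) (metis split_def append_take_drop_id prod.inject take_take min_absorb1 le_SucI order_refl)
  moreover have "finite T"
    by (auto simp: T_def finite_walks finite_walks_between related_neighbours_def finite_neighbours)
  ultimately have "card (anchored_cycles R k) \<le> card T"
    by (meson card_inj_on_le)
  also have "card T = (\<Sum>xs\<in>walks k. \<Sum>y\<in>related_neighbours R k xs. walk_count (k - 1) (last xs) y)"
    unfolding T_def walk_count_def
    by (subst card_SigmaI) (auto simp: finite_walks finite_walks_between finite_neighbours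
        related_neighbours_def intro!: sum.cong card_UN_disjoint, auto simp: walks_between_def)
  finally show ?thesis .
qed

lemma sum_related_neighbours_le:
  fixes f :: "'a \<Rightarrow> real"
  assumes sym: "\<forall>e\<in>E. \<forall>f\<in>E. R e f \<longrightarrow> R f e"
    and bound: "\<forall>u v w. {u, v} \<in> E \<longrightarrow> w \<in> V \<longrightarrow> card {z \<in> V. {w, z} \<in> E \<and> R {u, v} {w, z}} \<le> s"
    and xs: "xs \<in> walks k"
  shows "(\<Sum>y\<in>related_neighbours R k xs. f y)
    \<le> sqrt (real k * real s) * sqrt (\<Sum>y\<in>neighbours (hd xs). (f y)\<^sup>2)"
proof -
  have "real (card (related_neighbours R k xs)) \<le> real k * real s"
    using card_related_neighbours_le[OF sym bound xs] by (simp flip: of_nat_mult)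
  moreover have "(\<Sum>y\<in>related_neighbours R k xs. (f y)\<^sup>2) \<le> (\<Sum>y\<in>neighbours (hd xs). (f y)\<^sup>2)"
    by (rule sum_mono2) (auto simp: finite_neighbours related_neighbours_def)
  ultimately have "sqrt (card (related_neighbours R k xs)) * sqrt (\<Sum>y\<in>related_neighbours R k xs. (f y)\<^sup>2)
      \<le> sqrt (real k * real s) * sqrt (\<Sum>y\<in>neighbours (hd xs). (f y)\<^sup>2)"
    by (intro mult_mono real_sqrt_le_mono) (auto intro: sum_nonneg)
  then show ?thesis
    using sum_le_sqrt_card_sum_squares[of f "related_neighbours R k xs"] by linarith
qed

lemma card_anchored_cycles_le:
  assumes "k \<ge> 1"
    and sym: "\<forall>e\<in>E. \<forall>f\<in>E. R e f \<longrightarrow> R f e"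
    and bound: "\<forall>u v w. {u, v} \<in> E \<longrightarrow> w \<in> V \<longrightarrow> card {z \<in> V. {w, z} \<in> E \<and> R {u, v} {w, z}} \<le> s"
  shows "card (anchored_cycles R k) \<le> sqrt (real k * real s) * sqrt (real (walk_square_sum k))
    * sqrt (real (max_degree V E) * real (walk_square_sum (k - 1)))"
proof -
  let ?w = "\<lambda>L u v. real (walk_count L u v)"
  define g where "g u v = (\<Sum>y\<in>neighbours u. (?w (k - 1) v y)\<^sup>2)" for u v
  have g_nonneg: "g u v \<ge> 0" for u v
    by (simp add: g_def sum_nonneg)
  have per_walk: "(\<Sum>y\<in>related_neighbours R k xs. ?w (k - 1) (last xs) y)
      \<le> sqrt (real k * real s) * sqrt (g (hd xs) (last xs))" if "xs \<in> walks k" for xs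
    unfolding g_def by (rule sum_related_neighbours_le[OF sym bound that])
  have g_sum: "(\<Sum>u\<in>V. \<Sum>v\<in>V. g u v) \<le> real (max_degree V E) * real (walk_square_sum (k - 1))"
  proof -
    have "(\<Sum>u\<in>V. \<Sum>v\<in>V. g u v) = (\<Sum>u\<in>V. \<Sum>y\<in>neighbours u. \<Sum>v\<in>V. (?w (k - 1) v y)\<^sup>2)"
      unfolding g_def by (rule sum.cong[OF refl], rule sum.swap)
    also have "\<dots> \<le> max_degree V E * (\<Sum>y\<in>V. \<Sum>v\<in>V. (?w (k - 1) v y)\<^sup>2)"
      by (rule sum_sum_neighbours_le) (simp add: sum_nonneg)
    also have "(\<Sum>y\<in>V. \<Sum>v\<in>V. (?w (k - 1) v y)\<^sup>2) = walk_square_sum (k - 1)"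
      unfolding walk_square_sum_def of_nat_sum of_nat_power by (rule sum.swap)
    finally show ?thesis .
  qed
  have "card (anchored_cycles R k)
      \<le> (\<Sum>xs\<in>walks k. \<Sum>y\<in>related_neighbours R k xs. ?w (k - 1) (last xs) y)"
    using card_anchored_cycles_le_sum[OF assms(1), of R] by (simp flip: of_nat_sum)
  also have "\<dots> \<le> (\<Sum>xs\<in>walks k. sqrt (real k * real s) * sqrt (g (hd xs) (last xs)))"
    by (rule sum_mono) (rule per_walk)
  also have "\<dots> = sqrt (real k * real s) * (\<Sum>u\<in>V. \<Sum>v\<in>V. ?w k u v * sqrt (g u v))"
    by (simp only: sum_walks_by_ends[of "\<lambda>u v. sqrt (g u v)"] flip: sum_distrib_left)
  also have "(\<Sum>u\<in>V. \<Sum>v\<in>V. ?w k u v * sqrt (g u v))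
      \<le> sqrt (walk_square_sum k) * sqrt (\<Sum>u\<in>V. \<Sum>v\<in>V. g u v)"
    using sum_mult_le_sqrt_sum_squares[of "\<lambda>p. ?w k (fst p) (snd p)" "\<lambda>p. sqrt (g (fst p) (snd p))" "V \<times> V"]
    by (simp add: walk_square_sum_def g_nonneg sum.cartesian_product case_prod_beta)
  also have "\<dots> \<le> sqrt (walk_square_sum k) * sqrt (real (max_degree V E) * real (walk_square_sum (k - 1)))"
    using g_sum by (intro mult_left_mono) auto
  finally show ?thesis
    by (simp add: mult_left_mono mult.assoc)
qed

definition related_cycles :: "('a set \<Rightarrow> 'a set \<Rightarrow> bool) \<Rightarrow> nat \<Rightarrow> 'a list set" where
  "related_cycles R m = {xs \<in> hom_cycles V E m.
     \<exists>i<m. \<exists>j<m. i \<noteq> j \<and> R (cycle_edge m xs i) (cycle_edge m xs j)}"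

lemma card_related_cycles_le:
  assumes sym: "\<forall>e\<in>E. \<forall>f\<in>E. R e f \<longrightarrow> R f e"
  shows "card (related_cycles R (2 * k)) \<le> 2 * k * card (anchored_cycles R k)"
  unfolding anchored_cycles_def
proof (rule card_le_mult_card_rotations)
  show "finite (hom_cycles V E (2 * k))"
    using finite_V by (rule finite_hom_cycles)
  fix xs assume "xs \<in> related_cycles R (2 * k)"
  then obtain i j where xs: "xs \<in> hom_cycles V E (2 * k)" and ij: "i < 2 * k" "j < 2 * k" "i \<noteq> j"
    and R: "R (cycle_edge (2 * k) xs i) (cycle_edge (2 * k) xs j)"
    by (auto simp: related_cycles_def)
  then have R': "R (cycle_edge (2 * k) xs j) (cycle_edge (2 * k) xs i)"
    using sym by (auto simp: mem_hom_cycles_iff)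
  obtain r t where "r < 2 * k" "t < k"
    and rt: "((r + (2 * k - 1)) mod (2 * k), (r + t) mod (2 * k)) \<in> {(i, j), (j, i)}"
    using exists_anchoring_rotation[OF ij] by blast
  moreover have "length xs = 2 * k" "2 * k - 1 < 2 * k" "t < 2 * k"
    using xs ij \<open>t < k\<close> by (auto simp: hom_cycles_def)
  ultimately have "R (cycle_edge (2 * k) (rotate r xs) (2 * k - 1)) (cycle_edge (2 * k) (rotate r xs) t)"
    using R R' by (auto simp only: cycle_edge_rotate insert_iff prod.inject empty_iff)
  then show "\<exists>r<2 * k. \<exists>t<k. R (cycle_edge (2 * k) (rotate r xs) (2 * k - 1))
      (cycle_edge (2 * k) (rotate r xs) t)"
    using \<open>r < 2 * k\<close> \<open>t < k\<close> by blast
qed (auto simp: related_cycles_def rotate_mem_hom_cycles)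

end

theorem lemma2p1:
  fixes V :: "'a set" and E :: "'a set set" and R :: "'a set \<Rightarrow> 'a set \<Rightarrow> bool"
    and k s :: nat
  assumes "k \<ge> 2"
    and "simple_graph V E"
    and "\<forall>e\<in>E. \<forall>f\<in>E. R e f \<longrightarrow> R f e"
    and "\<forall>u v w. {u, v} \<in> E \<longrightarrow> w \<in> V \<longrightarrow>
           card {z \<in> V. {w, z} \<in> E \<and> R {u, v} {w, z}} \<le> s"
  shows "real (card {xs \<in> hom_cycles V E (2 * k).
            \<exists>i<2 * k. \<exists>j<2 * k. i \<noteq> j \<and>
              R {xs ! i, xs ! ((i + 1) mod (2 * k))} {xs ! j, xs ! ((j + 1) mod (2 * k))}})
         \<le> 32 * real k powr (3 / 2) * sqrt (real s) * sqrt (real (max_degree V E))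
            * real (card V) powr (1 / (2 * real k))
            * real (hom_cycle_count V E (2 * k)) powr (1 - 1 / (2 * real k))"
proof -
  interpret fin_simple_graph V E
    using assms(2) by unfold_locales
  let ?T = "\<lambda>j. real (walk_square_sum j)" and ?\<Delta> = "real (max_degree V E)"
  have k: "k \<ge> 1" "real k powr (3 / 2) = real k * sqrt (real k)"
    using assms(1) powr_add[of "real k" 1 "1 / 2"] by (simp_all add: powr_half_sqrt)
  have "walk_square_sum (k - 1) ^ k \<le> card V * walk_square_sum k ^ (k - 1)"
    using walk_square_sum_pow_le[of "k - 1"] k by simp
  then have mean: "sqrt (?T k) * sqrt (?T (k - 1))
      \<le> real (card V) powr (1 / (2 * real k)) * ?T k powr (1 - 1 / (2 * real k))"
    using k by (intro sqrt_mult_le_powr_of_pow_le) (simp_all flip: of_nat_power of_nat_mult)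
  have "real (card (related_cycles R (2 * k))) \<le> 2 * real k * real (card (anchored_cycles R k))"
    using card_related_cycles_le[OF assms(3), of k] of_nat_mono by fastforce
  also have "\<dots> \<le> 2 * real k * (sqrt (real k * real s) * sqrt (?T k) * sqrt (?\<Delta> * ?T (k - 1)))"
    using card_anchored_cycles_le[OF k(1) assms(3,4)] by (intro mult_left_mono) auto
  also have "\<dots> = 2 * real k powr (3 / 2) * sqrt (real s) * sqrt ?\<Delta> * (sqrt (?T k) * sqrt (?T (k - 1)))"
    by (simp add: k real_sqrt_mult)
  also have "\<dots> \<le> 32 * real k powr (3 / 2) * sqrt (real s) * sqrt ?\<Delta>
      * (real (card V) powr (1 / (2 * real k)) * ?T k powr (1 - 1 / (2 * real k)))"
    by (rule mult_mono[OF _ mean]) auto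
  finally show ?thesis
    using hom_cycle_count_eq_walk_square_sum[OF k(1)]
    by (simp add: related_cycles_def cycle_edge_def mult.assoc)
qed

end
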